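(* Let $p$ be a prime, $e\ge2$ and $r\ge2$ integers, and let $R$ be a ring of characteristic $p^{r+1}$. Then there is an $R$-ring automorphism $\alpha$ of the polynomial ring $R[x]$ (fixing $R$ elementwise) with $\alpha(x)=x+px^e$, and $\alpha$ has order exactly $p^r$. Consequently $x^{p^r}$ and $y^{p^r}$ are central elements of the Ore extension $R[x][y;\alpha]$ (in which $yf=\alpha(f)y$ for $f\in R[x]$).
   Context: $R[x]$ is the ordinary polynomial ring with $x$ central. $R[x][y;\alpha]$ is the free left $R[x]$-module on $\{y^n:n\in\mathbb N\}$ with multiplication determined by $yf=\alpha(f)y$. *)

theory Defs
  imports Main "HOL-Library.Poly_Mapping" "HOL-Computational_Algebra.Primes"
begin

text \<open>The polynomial ring R[x] over a (not necessarily commutative) ring R, x central: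
  finitely supported coefficient functions with convolution product.\<close>
type_synonym 'a upoly = "nat \<Rightarrow>\<^sub>0 'a"

definition pX :: "'a::ring_1 upoly" where
  "pX = Poly_Mapping.single 1 1"

definition pC :: "'a::ring_1 \<Rightarrow> 'a upoly" where
  "pC c = Poly_Mapping.single 0 c"

definition R_ring_automorphism :: "('a::ring_1 upoly \<Rightarrow> 'a upoly) \<Rightarrow> bool" where
  "R_ring_automorphism \<alpha> \<longleftrightarrow> bij \<alpha>
     \<and> (\<forall>f g. \<alpha> (f + g) = \<alpha> f + \<alpha> g)
     \<and> (\<forall>f g. \<alpha> (f * g) = \<alpha> f * \<alpha> g)
     \<and> \<alpha> 1 = 1
     \<and> (\<forall>c. \<alpha> (pC c) = pC c)"

text \<open>Ore extension R[x][y;\<alpha>]: free left R[x]-module on y^n, an element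
  \<Sum> f_n y^n is the finitely supported map n \<mapsto> f_n; product determined by
  (f y^m)(g y^n) = f \<alpha>^m(g) y^(m+n).\<close>
type_synonym 'a ore = "nat \<Rightarrow>\<^sub>0 'a upoly"

definition ore_mult :: "('a::ring_1 upoly \<Rightarrow> 'a upoly) \<Rightarrow> 'a ore \<Rightarrow> 'a ore \<Rightarrow> 'a ore" where
  "ore_mult \<alpha> P Q = (\<Sum>m\<in>Poly_Mapping.keys P. \<Sum>n\<in>Poly_Mapping.keys Q.
      Poly_Mapping.single (m + n) (Poly_Mapping.lookup P m * (\<alpha> ^^ m) (Poly_Mapping.lookup Q n)))"

definition ore_central :: "('a::ring_1 upoly \<Rightarrow> 'a upoly) \<Rightarrow> 'a ore \<Rightarrow> bool" where
  "ore_central \<alpha> Z \<longleftrightarrow> (\<forall>Q. ore_mult \<alpha> Z Q = ore_mult \<alpha> Q Z)"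

definition ore_y :: "'a::ring_1 ore" where
  "ore_y = Poly_Mapping.single 1 1"

definition ore_of_poly :: "'a::ring_1 upoly \<Rightarrow> 'a ore" where
  "ore_of_poly f = Poly_Mapping.single 0 f"

end

theory Submission
  imports Defs
begin

text \<open>The automorphism is the substitution \<alpha>: x \<mapsto> s = x + p x^e, a ring endomorphism of
  R[x] because s is central; moreover \<alpha> f \<equiv> f modulo p for every f. In the expansion
  \<alpha>^(p^r) = \<Sum>_j C(p^r, j) (\<alpha> - 1)^j every term with j \<ge> 1 vanishes, because (\<alpha> - 1)^j f is
  divisible by p^j and p^(r+1) divides C(p^r, j) p^j. Hence \<alpha>^(p^r) = id and \<alpha> is bijective.
  Modulo x^(e+1) one has \<alpha>^n(x) \<equiv> x + n p x^e, and n p \<noteq> 0 in R for n = p^(r-1), so the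
  order of \<alpha> is exactly p^r. Finally \<alpha>(x^(p^r)) = x^(p^r) (1 + p x^(e-1))^(p^r) = x^(p^r) by
  the same binomial argument applied to multiplication by 1 + p x^(e-1), so x^(p^r) and y^(p^r)
  are central in R[x][y;\<alpha>].\<close>

lemma prime_power_dvd_binomial_mult_power:
  fixes p r j :: nat
  assumes p: "prime p" and j: "1 \<le> j" "j \<le> p ^ r"
  shows "p ^ (r + 1) dvd (p ^ r choose j) * p ^ j"
proof -
  have p1: "p > 1" using p prime_gt_1_nat by blast
  obtain a b where jb: "j = p ^ a * b" and nb: "\<not> p dvd b"
    using multiplicity_decompose'[of j p] j p by (metis not_one_le_zero not_prime_unit)
  have "p ^ a \<le> j" using jb j by (cases b) auto
  then have "p ^ a \<le> p ^ r" using j by simp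
  then have ar: "a \<le> r" using p1 power_le_imp_le_exp by blast
  have "j * (p ^ r choose j) = p ^ r * ((p ^ r - 1) choose (j - 1))"
    using times_binomial_minus1_eq j by simp
  then have "p ^ a * (b * (p ^ r choose j)) = p ^ a * (p ^ (r - a) * ((p ^ r - 1) choose (j - 1)))"
    using jb ar by (simp add: mult.assoc flip: power_add)
  then have "p ^ (r - a) dvd b * (p ^ r choose j)"
    using p1 by simp
  moreover have "coprime (p ^ (r - a)) b"
    using nb p by (simp add: prime_imp_coprime)
  ultimately have "p ^ (r - a) dvd (p ^ r choose j)"
    using coprime_dvd_mult_right_iff by blast
  then have "p ^ ((r - a) + j) dvd (p ^ r choose j) * p ^ j"
    by (simp add: power_add mult_dvd_mono)
  moreover have "r + 1 \<le> (r - a) + j"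
  proof -
    have "a < 2 ^ a" by (rule less_exp)
    also have "\<dots> \<le> p ^ a" using p1 by (simp add: power_mono)
    finally show ?thesis using ar \<open>p ^ a \<le> j\<close> by simp
  qed
  ultimately show ?thesis
    using le_imp_power_dvd dvd_trans by blast
qed

lemma sum_binomial_Suc:
  fixes a :: "nat \<Rightarrow> 'b::ring_1"
  shows "(\<Sum>j\<le>Suc n. of_nat (Suc n choose j) * a j)
       = (\<Sum>j\<le>n. of_nat (n choose j) * a j) + (\<Sum>j\<le>n. of_nat (n choose j) * a (Suc j))"
proof -
  have "(\<Sum>j\<le>Suc n. of_nat (Suc n choose j) * a j)
      = a 0 + (\<Sum>j\<le>n. of_nat (n choose Suc j) * a (Suc j)) + (\<Sum>j\<le>n. of_nat (n choose j) * a (Suc j))"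
    by (simp add: sum.atMost_Suc_shift sum.distrib distrib_right algebra_simps binomial_eq_0
        del: sum.atMost_Suc)
  moreover have "(\<Sum>j\<le>n. of_nat (n choose j) * a j) = a 0 + (\<Sum>j\<le>n. of_nat (n choose Suc j) * a (Suc j))"
  proof -
    have "(\<Sum>j\<le>n. of_nat (n choose j) * a j) = (\<Sum>j\<le>Suc n. of_nat (n choose j) * a j)"
      by (simp add: binomial_eq_0)
    then show ?thesis
      by (simp add: sum.atMost_Suc_shift binomial_eq_0 del: sum.atMost_Suc)
  qed
  ultimately show ?thesis by simp
qed

lemma funpow_additive:
  fixes \<beta> :: "'b::plus \<Rightarrow> 'b"
  assumes "\<And>f g. \<beta> (f + g) = \<beta> f + \<beta> g"
  shows "(\<beta> ^^ n) (f + g) = (\<beta> ^^ n) f + (\<beta> ^^ n) g"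
  by (induction n) (simp_all add: assms)

lemma funpow_binomial_expansion:
  fixes \<beta> :: "'b::ring_1 \<Rightarrow> 'b"
  assumes add: "\<And>f g. \<beta> (f + g) = \<beta> f + \<beta> g"
  shows "(\<beta> ^^ n) f = (\<Sum>j\<le>n. of_nat (n choose j) * ((\<lambda>g. \<beta> g - g) ^^ j) f)"
proof (induction n arbitrary: f)
  case 0
  then show ?case by simp
next
  case (Suc n)
  let ?\<delta> = "\<lambda>g. \<beta> g - g"
  have "(\<beta> ^^ Suc n) f = (\<beta> ^^ n) f + (\<beta> ^^ n) (?\<delta> f)"
    by (simp add: funpow_Suc_right funpow_additive[OF add, symmetric] del: funpow.simps)
  also have "\<dots> = (\<Sum>j\<le>n. of_nat (n choose j) * (?\<delta> ^^ j) f)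
                  + (\<Sum>j\<le>n. of_nat (n choose j) * (?\<delta> ^^ Suc j) f)"
    by (simp only: Suc.IH funpow_Suc_right o_apply)
  also have "\<dots> = (\<Sum>j\<le>Suc n. of_nat (Suc n choose j) * (?\<delta> ^^ j) f)"
    by (rule sum_binomial_Suc[symmetric])
  finally show ?case .
qed

lemma funpow_diff_dvd_power:
  fixes \<beta> :: "'b::ring_1 \<Rightarrow> 'b"
  assumes scal: "\<And>c f. \<beta> (of_nat c * f) = of_nat c * \<beta> f"
    and mod_q: "\<And>f. \<exists>g. \<beta> f - f = of_nat q * g"
  shows "\<exists>g. ((\<lambda>g. \<beta> g - g) ^^ j) f = of_nat (q ^ j) * g"
proof (induction j)
  case 0
  then show ?case by (intro exI[of _ f]) simp
next
  case (Suc j)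
  then obtain g where g: "((\<lambda>g. \<beta> g - g) ^^ j) f = of_nat (q ^ j) * g" by blast
  obtain h where h: "\<beta> g - g = of_nat q * h" using mod_q by blast
  have "((\<lambda>g. \<beta> g - g) ^^ Suc j) f = of_nat (q ^ j) * (\<beta> g - g)"
    by (simp add: g scal right_diff_distrib del: of_nat_power)
  also have "\<dots> = of_nat (q ^ Suc j) * h"
    by (simp only: h power_Suc2 of_nat_mult mult.assoc)
  finally show ?case by blast
qed

lemma funpow_prime_power_eq_self:
  fixes \<beta> :: "'b::ring_1 \<Rightarrow> 'b"
  assumes p: "prime p"
    and add: "\<And>f g. \<beta> (f + g) = \<beta> f + \<beta> g"
    and scal: "\<And>c f. \<beta> (of_nat c * f) = of_nat c * \<beta> f"
    and mod_p: "\<And>f. \<exists>g. \<beta> f - f = of_nat p * g"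
    and char: "of_nat (p ^ (r + 1)) = (0::'b)"
  shows "(\<beta> ^^ (p ^ r)) f = f"
proof -
  let ?t = "\<lambda>j. of_nat (p ^ r choose j) * ((\<lambda>g. \<beta> g - g) ^^ j) f"
  have "?t j = 0" if "j \<in> {..p ^ r} - {0}" for j
  proof -
    obtain g where "((\<lambda>g. \<beta> g - g) ^^ j) f = of_nat (p ^ j) * g"
      using funpow_diff_dvd_power[OF scal mod_p] by blast
    then have "?t j = of_nat ((p ^ r choose j) * p ^ j) * g"
      by (simp add: mult.assoc del: of_nat_power)
    moreover have "p ^ (r + 1) dvd (p ^ r choose j) * p ^ j"
      using prime_power_dvd_binomial_mult_power[OF p] that by simp
    then obtain k where "(p ^ r choose j) * p ^ j = p ^ (r + 1) * k" ..
    ultimately show ?thesis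
      by (simp only: of_nat_mult char mult_zero_left)
  qed
  then have "(\<Sum>j\<le>p ^ r. ?t j) = (\<Sum>j\<in>{0}. ?t j)"
    by (intro sum.mono_neutral_right) auto
  then show ?thesis
    by (simp add: funpow_binomial_expansion[OF add])
qed

definition central :: "'a::times \<Rightarrow> bool" where
  "central z \<longleftrightarrow> (\<forall>f. z * f = f * z)"

lemma centralD: "central z \<Longrightarrow> z * f = f * z"
  by (simp add: central_def)

lemma central_left_commute:
  fixes x y z :: "'a::semigroup_mult"
  assumes "central z"
  shows "x * (z * y) = z * (x * y)"
proof -
  have "x * (z * y) = (x * z) * y"
    by (simp only: mult.assoc)
  also have "\<dots> = (z * x) * y"
    using centralD[OF assms, of x] by simp
  finally show ?thesis
    by (simp only: mult.assoc)
qed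

lemma central_1: "central (1::'a::monoid_mult)"
  by (simp add: central_def)

lemma central_of_nat: "central (of_nat n :: 'a::semiring_1)"
  by (simp add: central_def mult_of_nat_commute)

lemma central_add: "central a \<Longrightarrow> central b \<Longrightarrow> central (a + b :: 'a::semiring)"
  by (simp add: central_def algebra_simps)

lemma central_mult:
  fixes a b :: "'a::semigroup_mult"
  assumes "central a" and "central b"
  shows "central (a * b)"
  unfolding central_def
proof
  fix f
  have "a * b * f = a * (f * b)"
    using centralD[OF assms(2)] by (simp add: mult.assoc)
  also have "\<dots> = (a * f) * b"
    by (simp only: mult.assoc)
  also have "\<dots> = f * (a * b)"
    by (simp only: centralD[OF assms(1)] mult.assoc)
  finally show "a * b * f = f * (a * b)" .
qed

lemma central_power: "central (a::'a::monoid_mult) \<Longrightarrow> central (a ^ n)"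
  by (induction n) (simp_all add: central_1 central_mult)

lemma power_mult_central_left:
  fixes a b :: "'a::monoid_mult"
  assumes "central a"
  shows "(a * b) ^ n = a ^ n * b ^ n"
proof (induction n)
  case 0
  then show ?case by simp
next
  case (Suc n)
  have "(a * b) ^ Suc n = a * (b * a ^ n) * b ^ n"
    by (simp add: Suc mult.assoc)
  also have "\<dots> = a ^ Suc n * b ^ Suc n"
    using centralD[OF central_power[OF assms]] by (simp add: mult.assoc)
  finally show ?case .
qed

lemma one_plus_mult_power:
  fixes z q :: "'a::semiring_1"
  shows "\<exists>g. (1 + z * q) ^ k = 1 + z * g"
proof (induction k)
  case 0
  show ?case by (intro exI[of _ 0]) simp
next
  case (Suc k)
  then obtain g where "(1 + z * q) ^ k = 1 + z * g" ..
  then have "(1 + z * q) ^ Suc k = 1 + z * (g + q + g * z * q)"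
    by (simp only: power_Suc2) (simp add: algebra_simps)
  then show ?case ..
qed

lemma power_diff_of_nat_mult:
  fixes a b q :: "'a::ring_1"
  assumes "a - b = of_nat p * q"
  shows "\<exists>g. a ^ i - b ^ i = of_nat p * g"
proof (induction i)
  case 0
  show ?case by (intro exI[of _ 0]) simp
next
  case (Suc i)
  then obtain g where g: "a ^ i - b ^ i = of_nat p * g" ..
  have "a ^ Suc i - b ^ Suc i = (a ^ i - b ^ i) * a + b ^ i * (a - b)"
    by (simp only: power_Suc2) (simp add: algebra_simps)
  also have "\<dots> = of_nat p * (g * a) + b ^ i * (of_nat p * q)"
    by (simp add: g assms mult.assoc)
  also have "b ^ i * (of_nat p * q) = of_nat p * (b ^ i * q)"
    by (rule central_left_commute[OF central_of_nat])
  finally have "a ^ Suc i - b ^ Suc i = of_nat p * (g * a + b ^ i * q)"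
    by (simp add: distrib_left)
  then show ?case ..
qed

lemma pX_power: "(pX :: 'a::ring_1 upoly) ^ i = Poly_Mapping.single i 1"
  by (induction i) (simp_all add: pX_def mult_single)

lemma single_eq_pC_mult_pX_power: "Poly_Mapping.single i c = pC c * (pX :: 'a::ring_1 upoly) ^ i"
  by (simp add: pX_power pC_def mult_single)

lemma pC_mult: "pC (a * b) = pC a * (pC b :: 'a::ring_1 upoly)"
  by (simp add: pC_def mult_single)

lemma pC_add: "pC (a + b) = pC a + (pC b :: 'a::ring_1 upoly)"
  by (simp add: pC_def single_add)

lemma pC_1: "pC 1 = (1 :: 'a::ring_1 upoly)"
  by (simp add: pC_def)

lemma pC_of_nat: "pC (of_nat n) = (of_nat n :: 'a::ring_1 upoly)"
  by (simp add: pC_def)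

lemma lookup_pC_mult: "Poly_Mapping.lookup (pC c * (f :: 'a::ring_1 upoly)) i = c * Poly_Mapping.lookup f i"
  by (simp add: pC_def map.rep_eq when_def flip: mult_map_scale_conv_mult)

lemma lookup_pX_power_mult:
  "Poly_Mapping.lookup ((pX :: 'a::ring_1 upoly) ^ k * f) i
    = (if k \<le> i then Poly_Mapping.lookup f (i - k) else 0)"
proof -
  have "Poly_Mapping.lookup (pX ^ k * f) i = (\<Sum>q. Poly_Mapping.lookup f q when i = k + q)"
    by (simp add: pX_power lookup_mult lookup_single when_mult)
  also have "\<dots> = (\<Sum>q. Poly_Mapping.lookup f q when q = i - k \<and> k \<le> i)"
    by (rule Sum_any.cong) (auto simp: when_def)
  finally show ?thesis by (simp add: when_def)
qed

lemma lookup_mult_pX_power: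
  "Poly_Mapping.lookup ((f :: 'a::ring_1 upoly) * pX ^ k) i
    = (if k \<le> i then Poly_Mapping.lookup f (i - k) else 0)"
proof -
  have "(\<Sum>q. (1::'a) when k = q when i = l + q) = (1 when i = l + k)" for l
    by (subst when_commute) simp
  then have "Poly_Mapping.lookup (f * pX ^ k) i = (\<Sum>q. Poly_Mapping.lookup f q when i = q + k)"
    by (simp add: pX_power lookup_mult lookup_single mult_when)
  also have "\<dots> = (\<Sum>q. Poly_Mapping.lookup f q when q = i - k \<and> k \<le> i)"
    by (rule Sum_any.cong) (auto simp: when_def)
  finally show ?thesis by (simp add: when_def)
qed

lemma central_pX_power: "central ((pX :: 'a::ring_1 upoly) ^ k)"
  unfolding central_def
  by (intro allI poly_mapping_eqI) (simp only: lookup_pX_power_mult lookup_mult_pX_power)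

lemma central_pX: "central (pX :: 'a::ring_1 upoly)"
  using central_pX_power[of 1] by simp

lemma upoly_expansion:
  fixes f :: "'a::ring_1 upoly"
  assumes "finite K" and "Poly_Mapping.keys f \<subseteq> K"
  shows "f = (\<Sum>i\<in>K. Poly_Mapping.single i (Poly_Mapping.lookup f i))"
proof (rule poly_mapping_eqI)
  fix k
  have "Poly_Mapping.lookup (\<Sum>i\<in>K. Poly_Mapping.single i (Poly_Mapping.lookup f i)) k
      = (\<Sum>i\<in>K. if i = k then Poly_Mapping.lookup f i else 0)"
    by (simp add: lookup_sum lookup_single when_def)
  also have "\<dots> = Poly_Mapping.lookup f k"
    using assms by (auto simp: in_keys_iff)
  finally show "Poly_Mapping.lookup f k
      = Poly_Mapping.lookup (\<Sum>i\<in>K. Poly_Mapping.single i (Poly_Mapping.lookup f i)) k" ..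
qed

definition poly_subst :: "'a::ring_1 upoly \<Rightarrow> 'a upoly \<Rightarrow> 'a upoly" where
  "poly_subst s f = (\<Sum>i\<in>Poly_Mapping.keys f. pC (Poly_Mapping.lookup f i) * s ^ i)"

lemma poly_subst_superset:
  assumes "finite K" and "Poly_Mapping.keys f \<subseteq> K"
  shows "poly_subst s f = (\<Sum>i\<in>K. pC (Poly_Mapping.lookup f i) * s ^ i)"
  unfolding poly_subst_def
  by (rule sum.mono_neutral_left) (use assms in \<open>auto simp: in_keys_iff pC_def\<close>)

lemma poly_subst_add: "poly_subst s (f + g) = poly_subst s f + poly_subst s g"
proof -
  let ?K = "Poly_Mapping.keys f \<union> Poly_Mapping.keys g"
  have "poly_subst s (f + g) = (\<Sum>i\<in>?K. pC (Poly_Mapping.lookup (f + g) i) * s ^ i)"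
    using keys_add[of f g] by (intro poly_subst_superset) auto
  also have "\<dots> = (\<Sum>i\<in>?K. pC (Poly_Mapping.lookup f i) * s ^ i)
                 + (\<Sum>i\<in>?K. pC (Poly_Mapping.lookup g i) * s ^ i)"
    by (simp add: lookup_add pC_add distrib_right sum.distrib)
  also have "\<dots> = poly_subst s f + poly_subst s g"
    by (simp add: poly_subst_superset[of ?K f] poly_subst_superset[of ?K g])
  finally show ?thesis .
qed

lemma poly_subst_0: "poly_subst s 0 = 0"
  by (simp add: poly_subst_def)

lemma poly_subst_sum: "poly_subst s (\<Sum>i\<in>A. f i) = (\<Sum>i\<in>A. poly_subst s (f i))"
  by (induction A rule: infinite_finite_induct) (simp_all add: poly_subst_add poly_subst_0)

lemma poly_subst_single: "poly_subst s (Poly_Mapping.single i c) = pC c * s ^ i"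
  by (subst poly_subst_superset[of "{i}"]) auto

lemma poly_subst_pC: "poly_subst s (pC c) = pC c"
  by (simp add: pC_def poly_subst_single)

lemma poly_subst_1: "poly_subst s 1 = 1"
  using poly_subst_pC[of s 1] by (simp add: pC_1)

lemma poly_subst_pX: "poly_subst s pX = s"
  by (simp add: pX_def poly_subst_single pC_1)

lemma poly_subst_pX_self: "poly_subst pX f = f"
  by (simp add: poly_subst_def flip: single_eq_pC_mult_pX_power upoly_expansion[OF finite_keys order_refl])

lemma poly_subst_mult:
  assumes s: "central s"
  shows "poly_subst s (f * g) = poly_subst s f * poly_subst s g"
proof -
  let ?F = "Poly_Mapping.keys f" and ?G = "Poly_Mapping.keys g"
  let ?f = "Poly_Mapping.lookup f" and ?g = "Poly_Mapping.lookup g"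
  have "f * g = (\<Sum>i\<in>?F. Poly_Mapping.single i (?f i)) * (\<Sum>j\<in>?G. Poly_Mapping.single j (?g j))"
    by (simp flip: upoly_expansion[OF finite_keys order_refl])
  also have "\<dots> = (\<Sum>i\<in>?F. \<Sum>j\<in>?G. Poly_Mapping.single (i + j) (?f i * ?g j))"
    by (simp add: sum_distrib_left sum_distrib_right mult_single) (rule sum.swap)
  finally have "poly_subst s (f * g) = (\<Sum>i\<in>?F. \<Sum>j\<in>?G. pC (?f i * ?g j) * s ^ (i + j))"
    by (simp add: poly_subst_sum poly_subst_single)
  also have "\<dots> = (\<Sum>i\<in>?F. \<Sum>j\<in>?G. (pC (?f i) * s ^ i) * (pC (?g j) * s ^ j))"
  proof (intro sum.cong refl)
    fix i j
    have "s ^ i * pC (?g j) = pC (?g j) * s ^ i"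
      by (rule centralD[OF central_power[OF s]])
    then show "pC (?f i * ?g j) * s ^ (i + j) = (pC (?f i) * s ^ i) * (pC (?g j) * s ^ j)"
      by (simp add: pC_mult power_add mult.assoc flip: mult.assoc[of "s ^ i"])
  qed
  also have "\<dots> = poly_subst s f * poly_subst s g"
    by (simp add: poly_subst_def sum_distrib_left sum_distrib_right) (rule sum.swap)
  finally show ?thesis .
qed

lemma poly_subst_power: "central s \<Longrightarrow> poly_subst s (f ^ n) = poly_subst s f ^ n"
  by (induction n) (simp_all add: poly_subst_1 poly_subst_mult)

lemma poly_subst_of_nat: "poly_subst s (of_nat n) = of_nat n"
  using poly_subst_pC[of s "of_nat n"] by (simp add: pC_of_nat)

lemma poly_subst_diff_of_nat_mult:
  assumes "s - pX = of_nat p * q"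
  shows "\<exists>g. poly_subst s f - f = of_nat p * g"
proof -
  let ?K = "Poly_Mapping.keys f" and ?f = "Poly_Mapping.lookup f"
  obtain w where w: "\<And>i. s ^ i - pX ^ i = of_nat p * w i"
    using power_diff_of_nat_mult[OF assms] by metis
  have "poly_subst s f - f = poly_subst s f - poly_subst pX f"
    by (simp add: poly_subst_pX_self)
  also have "\<dots> = (\<Sum>i\<in>?K. pC (?f i) * (s ^ i - pX ^ i))"
    by (simp add: poly_subst_def sum_subtractf right_diff_distrib)
  also have "\<dots> = of_nat p * (\<Sum>i\<in>?K. pC (?f i) * w i)"
    by (simp add: w sum_distrib_left central_left_commute[OF central_of_nat])
  finally show ?thesis ..
qed

lemma of_nat_upoly_eq_0_iff: "(of_nat n :: 'a::ring_1 upoly) = 0 \<longleftrightarrow> (of_nat n :: 'a) = 0"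
  by (auto simp: poly_mapping_eq_iff fun_eq_iff lookup_of_nat when_def)

lemma funpow_gcd_eq_id:
  assumes "f ^^ m = id" and "f ^^ n = id"
  shows "f ^^ gcd m n = id"
  using assms
proof (induction m n rule: gcd_nat_induct)
  case (base m)
  then show ?case by simp
next
  case (step m n)
  have "f ^^ (m mod n) = id"
    using funpow_mod_eq[where f = f and m = m and n = n] step.prems by (simp add: fun_eq_iff)
  then show ?case
    using step by (simp add: gcd_red_nat[of m n])
qed

lemma funpow_prime_power_order:
  fixes f :: "'b \<Rightarrow> 'b"
  assumes p: "prime p" and period: "f ^^ (p ^ r) = id" and not_id: "f ^^ (p ^ (r - 1)) \<noteq> id"
    and k: "0 < k" "k < p ^ r"
  shows "f ^^ k \<noteq> id"
proof
  assume "f ^^ k = id"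
  then have gcd_id: "f ^^ gcd k (p ^ r) = id"
    using period by (rule funpow_gcd_eq_id)
  obtain i where i: "i \<le> r" "gcd k (p ^ r) = p ^ i"
    using divides_primepow_nat[OF p] gcd_dvd2 by blast
  have "p ^ i < p ^ r"
    using i k by (metis gcd_le1_nat le_less_trans not_gr_zero)
  then have "i < r"
    using p prime_gt_1_nat by (simp add: power_strict_increasing_iff)
  then have "p ^ (r - 1) = p ^ i * p ^ (r - 1 - i)"
    by (simp flip: power_add)
  then have "f ^^ (p ^ (r - 1)) = id"
    using gcd_id i by (simp flip: funpow_mult)
  with not_id show False ..
qed

lemma bij_if_funpow_eq_id:
  assumes "f ^^ n = id" and "0 < n"
  shows "bij f"
proof (rule o_bij)
  have n: "n = Suc (n - 1)" using assms(2) by simp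
  show "f ^^ (n - 1) \<circ> f = id"
    using assms(1) by (subst (asm) n) (simp only: funpow_Suc_right)
  show "f \<circ> f ^^ (n - 1) = id"
    using assms(1) by (subst (asm) n) (simp only: funpow.simps)
qed

lemma R_ring_automorphism_poly_subst:
  assumes "central s" and "poly_subst s ^^ n = id" and "0 < n"
  shows "R_ring_automorphism (poly_subst s)"
  unfolding R_ring_automorphism_def
  using assms bij_if_funpow_eq_id
  by (simp add: poly_subst_add poly_subst_mult poly_subst_1 poly_subst_pC)

lemma central_pX_plus: "central (pX + of_nat p * pX ^ e :: 'a::ring_1 upoly)"
  by (intro central_add central_mult central_pX central_of_nat central_pX_power)

lemma pX_plus_eq_pX_mult:
  assumes "e \<ge> 1"
  shows "pX + of_nat p * pX ^ e = (pX :: 'a::ring_1 upoly) * (1 + of_nat p * pX ^ (e - 1))"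
proof -
  have "pX * (of_nat p * pX ^ (e - 1)) = of_nat p * (pX ^ e :: 'a upoly)"
    using assms by (simp add: central_left_commute[OF central_of_nat] flip: power_Suc)
  then show ?thesis
    by (simp add: distrib_left)
qed

lemma funpow_poly_subst_pX_plus_prime_power:
  assumes p: "prime p" and char: "of_nat (p ^ (r + 1)) = (0 :: 'a::ring_1 upoly)"
  shows "poly_subst (pX + of_nat p * pX ^ e :: 'a upoly) ^^ (p ^ r) = id"
proof
  fix f
  let ?\<alpha> = "poly_subst (pX + of_nat p * pX ^ e :: 'a upoly)"
  have "(?\<alpha> ^^ p ^ r) f = f"
  proof (rule funpow_prime_power_eq_self[OF p _ _ _ char])
    show "?\<alpha> (f + g) = ?\<alpha> f + ?\<alpha> g" for f g
      by (rule poly_subst_add)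
    show "?\<alpha> (of_nat c * f) = of_nat c * ?\<alpha> f" for c f
      by (simp add: poly_subst_mult[OF central_pX_plus] poly_subst_of_nat)
    show "\<exists>g. ?\<alpha> f - f = of_nat p * g" for f
      by (rule poly_subst_diff_of_nat_mult) simp
  qed
  then show "(?\<alpha> ^^ p ^ r) f = id f"
    by simp
qed

lemma poly_subst_pX_plus_fixes_pX_power:
  assumes p: "prime p" and e: "e \<ge> 1" and char: "of_nat (p ^ (r + 1)) = (0 :: 'a::ring_1 upoly)"
  shows "poly_subst (pX + of_nat p * pX ^ e) (pX ^ (p ^ r)) = (pX ^ (p ^ r) :: 'a upoly)"
proof -
  let ?t = "1 + of_nat p * pX ^ (e - 1) :: 'a upoly"
  have "(times ?t ^^ (p ^ r)) 1 = 1"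
  proof (rule funpow_prime_power_eq_self[OF p _ _ _ char])
    show "\<And>f g. ?t * (f + g) = ?t * f + ?t * g"
      by (simp add: distrib_left)
    show "\<And>c f. ?t * (of_nat c * f) = of_nat c * (?t * f)"
      by (rule central_left_commute[OF central_of_nat])
    show "\<And>f. \<exists>g. ?t * f - f = of_nat p * g"
      by (intro exI) (simp add: distrib_right mult.assoc)
  qed
  then have t_power: "?t ^ (p ^ r) = 1"
    by (simp add: funpow_times_power[where f = "\<lambda>_. p ^ r"])
  have "poly_subst (pX + of_nat p * pX ^ e) (pX ^ (p ^ r)) = (pX + of_nat p * pX ^ e) ^ (p ^ r)"
    by (simp add: poly_subst_power[OF central_pX_plus] poly_subst_pX)
  also have "\<dots> = pX ^ (p ^ r) * ?t ^ (p ^ r)"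
    by (simp add: pX_plus_eq_pX_mult[OF e] power_mult_central_left[OF central_pX])
  finally show ?thesis
    using t_power by simp
qed

lemma funpow_poly_subst_pX_plus_pX:
  fixes p e n :: nat
  assumes e: "e \<ge> 2"
  defines "\<alpha> \<equiv> poly_subst (pX + of_nat p * pX ^ e :: 'a::ring_1 upoly)"
  shows "\<exists>h. (\<alpha> ^^ n) pX = pX + of_nat (n * p) * pX ^ e + pX ^ (e + 1) * h"
proof (induction n)
  case 0
  show ?case by (intro exI[of _ 0]) simp
next
  case (Suc n)
  let ?s = "pX + of_nat p * pX ^ e :: 'a upoly"
  let ?t = "1 + of_nat p * pX ^ (e - 1) :: 'a upoly"
  let ?c = "of_nat (n * p) :: 'a upoly"
  from Suc obtain h where h: "(\<alpha> ^^ n) pX = pX + ?c * pX ^ e + pX ^ (e + 1) * h" ..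
  have s_power: "?s ^ k = pX ^ k * ?t ^ k" for k
    using e by (simp add: pX_plus_eq_pX_mult power_mult_central_left[OF central_pX])
  obtain g where g: "?t ^ e = 1 + pX * g"
  proof -
    obtain d where "e = 2 + d"
      using le_Suc_ex[OF e] by blast
    then have "?t = 1 + pX * (of_nat p * pX ^ d)"
      by (simp add: central_left_commute[OF central_of_nat])
    then show thesis
      using one_plus_mult_power that by metis
  qed
  have c_s_power: "?c * ?s ^ e = ?c * pX ^ e + pX ^ (e + 1) * (?c * g)"
  proof -
    have "?c * ?s ^ e = ?c * pX ^ e + ?c * (pX ^ e * (pX * g))"
      by (simp only: s_power g distrib_left mult_1_right)
    also have "pX ^ e * (pX * g) = pX ^ (e + 1) * g"
      by (simp only: mult.assoc[symmetric] power_Suc2[symmetric] Suc_eq_plus1)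
    also have "?c * (pX ^ (e + 1) * g) = pX ^ (e + 1) * (?c * g)"
      by (rule central_left_commute[OF central_pX_power])
    finally show ?thesis .
  qed
  have "(\<alpha> ^^ Suc n) pX = \<alpha> (pX + ?c * pX ^ e + pX ^ (e + 1) * h)"
    by (simp add: h)
  also have "\<dots> = ?s + ?c * ?s ^ e + ?s ^ (e + 1) * \<alpha> h"
    by (simp add: \<alpha>_def poly_subst_add poly_subst_mult[OF central_pX_plus] poly_subst_of_nat
        poly_subst_power[OF central_pX_plus] poly_subst_pX)
  also have "\<dots> = pX + of_nat (Suc n * p) * pX ^ e + pX ^ (e + 1) * (?c * g + ?t ^ (e + 1) * \<alpha> h)"
    by (simp only: c_s_power) (simp only: s_power mult.assoc, simp add: algebra_simps)
  finally show ?case ..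
qed

lemma lookup_funpow_poly_subst_pX_plus_pX:
  assumes "e \<ge> 2"
  shows "Poly_Mapping.lookup ((poly_subst (pX + of_nat p * pX ^ e) ^^ n) pX) e
    = (of_nat (n * p) :: 'a::ring_1)"
proof -
  obtain h :: "'a upoly" where "(poly_subst (pX + of_nat p * pX ^ e) ^^ n) pX
      = pX + of_nat (n * p) * pX ^ e + pX ^ (e + 1) * h"
    using funpow_poly_subst_pX_plus_pX[OF assms] by blast
  moreover have "Poly_Mapping.lookup (pX :: 'a upoly) e = 0"
    using assms by (simp add: pX_def lookup_single)
  moreover have "Poly_Mapping.lookup (pC c * pX ^ e :: 'a upoly) e = c" for c
    by (simp add: lookup_pC_mult pX_power)
  then have "Poly_Mapping.lookup (of_nat (n * p) * pX ^ e :: 'a upoly) e = of_nat (n * p)"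
    by (simp only: flip: pC_of_nat)
  moreover have "Poly_Mapping.lookup (pX ^ (e + 1) * h) e = 0"
    using lookup_pX_power_mult[of "e + 1" h e] by simp
  ultimately show ?thesis
    by (simp add: lookup_add)
qed

lemma funpow_poly_subst_pX_plus_ne_id:
  assumes p: "prime p" and e: "e \<ge> 2" and r: "r \<ge> 1" and char: "CHAR('a::ring_1) = p ^ (r + 1)"
  shows "poly_subst (pX + of_nat p * pX ^ e :: 'a upoly) ^^ p ^ (r - 1) \<noteq> id"
proof
  let ?\<alpha> = "poly_subst (pX + of_nat p * pX ^ e :: 'a upoly)"
  assume id: "?\<alpha> ^^ p ^ (r - 1) = id"
  have "p ^ r = p ^ (r - 1) * p"
    using r by (simp flip: power_Suc2)
  then have "(of_nat (p ^ r) :: 'a) = Poly_Mapping.lookup ((?\<alpha> ^^ p ^ (r - 1)) pX) e"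
    by (simp only: lookup_funpow_poly_subst_pX_plus_pX[OF e])
  also have "\<dots> = Poly_Mapping.lookup pX e"
    by (simp only: id id_apply)
  also have "\<dots> = 0"
    using e by (simp add: pX_def lookup_single)
  finally have "p ^ (r + 1) dvd p ^ r"
    by (simp only: of_nat_eq_0_iff_char_dvd char)
  then show False
    using prime_ge_2_nat[OF p] by (simp only: dvd_power_iff_le)
qed

lemma ore_mult_superset:
  assumes "finite K" and "Poly_Mapping.keys P \<subseteq> K" and "finite L" and "Poly_Mapping.keys Q \<subseteq> L"
    and "\<And>m. (\<alpha> ^^ m) 0 = 0"
  shows "ore_mult \<alpha> P Q = (\<Sum>m\<in>K. \<Sum>n\<in>L. Poly_Mapping.single (m + n)
            (Poly_Mapping.lookup P m * (\<alpha> ^^ m) (Poly_Mapping.lookup Q n)))"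
proof -
  have "ore_mult \<alpha> P Q = (\<Sum>m\<in>Poly_Mapping.keys P. \<Sum>n\<in>L. Poly_Mapping.single (m + n)
            (Poly_Mapping.lookup P m * (\<alpha> ^^ m) (Poly_Mapping.lookup Q n)))"
    unfolding ore_mult_def
    by (intro sum.cong refl sum.mono_neutral_left) (use assms in \<open>auto simp: in_keys_iff\<close>)
  also have "\<dots> = (\<Sum>m\<in>K. \<Sum>n\<in>L. Poly_Mapping.single (m + n)
            (Poly_Mapping.lookup P m * (\<alpha> ^^ m) (Poly_Mapping.lookup Q n)))"
    by (intro sum.mono_neutral_left) (use assms in \<open>auto simp: in_keys_iff\<close>)
  finally show ?thesis .
qed

lemma ore_central_single:
  assumes z: "central z" and fix_z: "\<alpha> z = z" and fix_0: "\<alpha> 0 = 0" and period: "\<alpha> ^^ N = id"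
  shows "ore_central \<alpha> (Poly_Mapping.single N (z :: 'a::ring_1 upoly))"
  unfolding ore_central_def
proof
  fix Q :: "'a ore"
  let ?Z = "Poly_Mapping.single N z" and ?Q = "Poly_Mapping.lookup Q"
  have funpow_fix: "(\<alpha> ^^ m) x = x" if "\<alpha> x = x" for m x
    by (induction m) (simp_all add: that)
  have keys: "Poly_Mapping.keys ?Z \<subseteq> {N}"
    by simp
  have "ore_mult \<alpha> ?Z Q = (\<Sum>n\<in>Poly_Mapping.keys Q. Poly_Mapping.single (N + n) (z * ?Q n))"
    by (subst ore_mult_superset[OF _ keys]) (simp_all add: period funpow_fix[OF fix_0])
  also have "\<dots> = (\<Sum>n\<in>Poly_Mapping.keys Q. Poly_Mapping.single (n + N) (?Q n * z))"
    using centralD[OF z] by (simp add: add.commute)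
  also have "\<dots> = ore_mult \<alpha> Q ?Z"
    by (subst ore_mult_superset[where L = "{N}"]) (simp_all add: funpow_fix fix_z fix_0)
  finally show "ore_mult \<alpha> ?Z Q = ore_mult \<alpha> Q ?Z" .
qed

theorem mainTheorem19:
  fixes p e r :: nat
  assumes "prime p" and "e \<ge> 2" and "r \<ge> 2"
    and "CHAR('a::ring_1) = p ^ (r + 1)"
  shows "\<exists>\<alpha> :: 'a upoly \<Rightarrow> 'a upoly.
           R_ring_automorphism \<alpha>
         \<and> \<alpha> pX = pX + of_nat p * pX ^ e
         \<and> \<alpha> ^^ (p ^ r) = id
         \<and> (\<forall>k. 0 < k \<and> k < p ^ r \<longrightarrow> \<alpha> ^^ k \<noteq> id)
         \<and> ore_central \<alpha> (ore_of_poly (pX ^ (p ^ r)))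
         \<and> ore_central \<alpha> (Poly_Mapping.single (p ^ r) 1)"
proof -
  define \<alpha> where "\<alpha> = poly_subst (pX + of_nat p * pX ^ e :: 'a upoly)"
  have char: "of_nat (p ^ (r + 1)) = (0 :: 'a upoly)"
    using assms(4) by (simp only: of_nat_upoly_eq_0_iff of_nat_eq_0_iff_char_dvd dvd_refl)
  have period: "\<alpha> ^^ p ^ r = id"
    unfolding \<alpha>_def using funpow_poly_subst_pX_plus_prime_power[OF assms(1) char] .
  have "\<alpha> ^^ p ^ (r - 1) \<noteq> id"
    unfolding \<alpha>_def using assms by (intro funpow_poly_subst_pX_plus_ne_id) auto
  then have order: "\<forall>k. 0 < k \<and> k < p ^ r \<longrightarrow> \<alpha> ^^ k \<noteq> id"
    using funpow_prime_power_order[OF assms(1) period] by blast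
  have "\<alpha> (pX ^ p ^ r) = pX ^ p ^ r"
    unfolding \<alpha>_def using assms(1,2) char by (intro poly_subst_pX_plus_fixes_pX_power) auto
  moreover have "\<alpha> 0 = 0" and "\<alpha> 1 = 1"
    by (simp_all add: \<alpha>_def poly_subst_0 poly_subst_1)
  ultimately have "ore_central \<alpha> (ore_of_poly (pX ^ p ^ r))"
    and "ore_central \<alpha> (Poly_Mapping.single (p ^ r) 1)"
    unfolding ore_of_poly_def
    by (simp_all add: ore_central_single central_pX_power central_1 period)
  moreover have "R_ring_automorphism \<alpha>"
    using R_ring_automorphism_poly_subst[OF central_pX_plus period[unfolded \<alpha>_def]]
      prime_gt_0_nat[OF assms(1)]
    by (simp add: \<alpha>_def)
  moreover have "\<alpha> pX = pX + of_nat p * pX ^ e"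
    by (simp add: \<alpha>_def poly_subst_pX)
  ultimately show ?thesis
    using period order by blast
qed

end
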